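(* Let $\vec{A}\in\mathcal{G}^{p,q}$, let $(\vec{B}_1,\dots,\vec{B}_d)$ be an ordered tuple of mutually coorthogonal blades with $\vec B_k^2\in\mathbb{R}\setminus\{0\}$, and let $\vec{j}\in\{0,1\}^d$. Then $\vec{A}_{\vec c^{\vec{j}}(\overrightarrow{\vec B_1,\dots,\vec B_d})}=\vec{A}_{\vec c^{\vec{j}}(\overleftarrow{\vec B_1,\dots,\vec B_d})}$.
   Context: $\mathcal{G}^{p,q}$ is the real geometric algebra of $\mathbb{R}^{p,q}$. Blades are coorthogonal if $\vec A\vec B=\pm\vec B\vec A$. For invertible $\vec B$: $\vec{A}_{\vec c^0(\vec{B})}=\frac12(\vec{A}+\vec{B}^{-1}\vec{A}\vec{B})$, $\vec{A}_{\vec c^1(\vec{B})}=\frac12(\vec{A}-\vec{B}^{-1}\vec{A}\vec{B})$; $\vec{A}_{\vec c^{\vec{j}}(\overrightarrow{\vec B_1,\dots,\vec B_d})}=((\vec{A}_{\vec c^{j_1}(\vec{B}_1)})_{\vec c^{j_2}(\vec{B}_2)}\cdots)_{\vec c^{j_d}(\vec{B}_d)}$ and $\vec{A}_{\vec c^{\vec{j}}(\overleftarrow{\vec B_1,\dots,\vec B_d})}=((\vec{A}_{\vec c^{j_d}(\vec{B}_d)})_{\vec c^{j_{d-1}}(\vec{B}_{d-1})}\cdots)_{\vec c^{j_1}(\vec{B}_1)}$. *)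

theory Defs
  imports Complex_Main
begin

text \<open>Concrete model of the real geometric algebra G^{p,q} of R^{p,q}.
  Orthonormal basis e_0,...,e_{p+q-1} with e_i^2 = 1 for i < p and e_i^2 = -1 for
  p <= i < p+q.  A multivector is a coefficient function on index sets S (the basis
  blade e_S = product of the e_i, i in S, in increasing order).\<close>

type_synonym mvec = "nat set \<Rightarrow> real"

definition mv :: "nat \<Rightarrow> nat \<Rightarrow> mvec \<Rightarrow> bool" where
  "mv p q A \<longleftrightarrow> (\<forall>S. A S \<noteq> 0 \<longrightarrow> S \<subseteq> {..<p+q})"

definition metric :: "nat \<Rightarrow> nat \<Rightarrow> real" where
  "metric p i = (if i < p then 1 else -1)"

text \<open>Sign / metric factor in  e_T e_U = bsign p T U * e_(T symdiff U).\<close>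
definition bsign :: "nat \<Rightarrow> nat set \<Rightarrow> nat set \<Rightarrow> real" where
  "bsign p T U = (-1) ^ card {(t,u). t \<in> T \<and> u \<in> U \<and> u < t} * (\<Prod>i\<in>T \<inter> U. metric p i)"

definition symdiff :: "nat set \<Rightarrow> nat set \<Rightarrow> nat set" where
  "symdiff T U = (T - U) \<union> (U - T)"

definition gp :: "nat \<Rightarrow> nat \<Rightarrow> mvec \<Rightarrow> mvec \<Rightarrow> mvec" where
  "gp p q A B = (\<lambda>S. \<Sum>T\<in>Pow {..<p+q}. \<Sum>U\<in>Pow {..<p+q}.
      (if symdiff T U = S then bsign p T U * A T * B U else 0))"

definition op :: "nat \<Rightarrow> nat \<Rightarrow> mvec \<Rightarrow> mvec \<Rightarrow> mvec" where
  "op p q A B = (\<lambda>S. \<Sum>T\<in>Pow {..<p+q}. \<Sum>U\<in>Pow {..<p+q}.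
      (if T \<inter> U = {} \<and> T \<union> U = S then bsign p T U * A T * B U else 0))"

definition scal :: "real \<Rightarrow> mvec" where
  "scal r = (\<lambda>S. if S = {} then r else 0)"

definition mv_add :: "mvec \<Rightarrow> mvec \<Rightarrow> mvec" where
  "mv_add A B = (\<lambda>S. A S + B S)"

definition mv_sub :: "mvec \<Rightarrow> mvec \<Rightarrow> mvec" where
  "mv_sub A B = (\<lambda>S. A S - B S)"

definition smul :: "real \<Rightarrow> mvec \<Rightarrow> mvec" where
  "smul r A = (\<lambda>S. r * A S)"

definition is_vector :: "nat \<Rightarrow> nat \<Rightarrow> mvec \<Rightarrow> bool" where
  "is_vector p q v \<longleftrightarrow> mv p q v \<and> (\<forall>S. v S \<noteq> 0 \<longrightarrow> card S = 1)"

text \<open>Blade: a scalar multiple of an outer product of vectors (the empty outer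
  product is the scalar 1, so scalars are 0-blades).\<close>
definition is_blade :: "nat \<Rightarrow> nat \<Rightarrow> mvec \<Rightarrow> bool" where
  "is_blade p q B \<longleftrightarrow> (\<exists>r vs. (\<forall>v\<in>set vs. is_vector p q v) \<and>
      B = smul r (foldr (op p q) vs (scal 1)))"

definition coorthogonal :: "nat \<Rightarrow> nat \<Rightarrow> mvec \<Rightarrow> mvec \<Rightarrow> bool" where
  "coorthogonal p q A B \<longleftrightarrow> gp p q A B = gp p q B A \<or> gp p q A B = smul (-1) (gp p q B A)"

definition invertible :: "nat \<Rightarrow> nat \<Rightarrow> mvec \<Rightarrow> bool" where
  "invertible p q B \<longleftrightarrow> (\<exists>C. mv p q C \<and> gp p q B C = scal 1 \<and> gp p q C B = scal 1)"

definition ga_inv :: "nat \<Rightarrow> nat \<Rightarrow> mvec \<Rightarrow> mvec" where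
  "ga_inv p q B = (THE C. mv p q C \<and> gp p q B C = scal 1 \<and> gp p q C B = scal 1)"

definition cproj :: "nat \<Rightarrow> nat \<Rightarrow> nat \<Rightarrow> mvec \<Rightarrow> mvec \<Rightarrow> mvec" where
  "cproj p q j B A =
     (let C = gp p q (gp p q (ga_inv p q B) A) B in
      if j = 0 then smul (1/2) (mv_add A C) else smul (1/2) (mv_sub A C))"

definition cproj_fwd :: "nat \<Rightarrow> nat \<Rightarrow> nat list \<Rightarrow> mvec list \<Rightarrow> mvec \<Rightarrow> mvec" where
  "cproj_fwd p q js Bs A = foldl (\<lambda>X (B, j). cproj p q j B X) A (zip Bs js)"

definition cproj_bwd :: "nat \<Rightarrow> nat \<Rightarrow> nat list \<Rightarrow> mvec list \<Rightarrow> mvec \<Rightarrow> mvec" where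
  "cproj_bwd p q js Bs A = foldr (\<lambda>(B, j) X. cproj p q j B X) (zip Bs js) A"

end

theory Submission
  imports Defs
begin

text \<open>Each projection is \<open>X \<mapsto> (X \<plusminus> B\<^sup>-\<^sup>1 X B) / 2\<close>, so it suffices that the
  conjugations by two distinct blades of the tuple commute. For a blade with \<open>B\<^sup>2 = c \<noteq> 0\<close>
  we have \<open>B\<^sup>-\<^sup>1 = B / c\<close>; composing the conjugations by \<open>B\<close> and \<open>B'\<close> gives, up to a
  scalar, \<open>(B B') X (B' B)\<close>, and coorthogonality \<open>B B' = \<plusminus>B' B\<close> introduces the same sign on
  both sides of \<open>X\<close>. Pairwise commuting maps can be composed in either order. The
  computational core is associativity of the geometric product in the coordinate model,
  which reduces to a cocycle identity for the sign \<open>bsign\<close> of products of basis blades.\<close>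

definition inversions :: "nat set \<Rightarrow> nat set \<Rightarrow> nat" where
  "inversions T U = card {(t, u). t \<in> T \<and> u \<in> U \<and> u < t}"

lemma bsign_eq: "bsign p T U = (-1) ^ inversions T U * (\<Prod>i\<in>T \<inter> U. metric p i)"
  by (simp add: bsign_def inversions_def)

lemma inversions_Un_left:
  assumes "finite X" "finite Y" "finite V" "X \<inter> Y = {}"
  shows "inversions (X \<union> Y) V = inversions X V + inversions Y V"
proof -
  have split: "{(t, u). t \<in> X \<union> Y \<and> u \<in> V \<and> u < t} =
      {(t, u). t \<in> X \<and> u \<in> V \<and> u < t} \<union> {(t, u). t \<in> Y \<and> u \<in> V \<and> u < t}"
    by auto
  have fin: "finite {(t, u). t \<in> Z \<and> u \<in> V \<and> u < t}" if "finite Z" for Z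
    by (rule finite_subset[of _ "Z \<times> V"]) (use that assms(3) in auto)
  show ?thesis
    unfolding inversions_def split by (rule card_Un_disjoint) (use fin assms in auto)
qed

lemma inversions_Un_right:
  assumes "finite X" "finite Y" "finite V" "X \<inter> Y = {}"
  shows "inversions V (X \<union> Y) = inversions V X + inversions V Y"
proof -
  have split: "{(t, u). t \<in> V \<and> u \<in> X \<union> Y \<and> u < t} =
      {(t, u). t \<in> V \<and> u \<in> X \<and> u < t} \<union> {(t, u). t \<in> V \<and> u \<in> Y \<and> u < t}"
    by auto
  have fin: "finite {(t, u). t \<in> V \<and> u \<in> Z \<and> u < t}" if "finite Z" for Z
    by (rule finite_subset[of _ "V \<times> Z"]) (use that assms(3) in auto)
  show ?thesis
    unfolding inversions_def split by (rule card_Un_disjoint) (use fin assms in auto)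
qed

lemma inversions_symdiff_left:
  assumes "finite T" "finite U" "finite V"
  shows "inversions (symdiff T U) V + 2 * inversions (T \<inter> U) V = inversions T V + inversions U V"
proof -
  have "T = (T - U) \<union> (T \<inter> U)" "U = (U - T) \<union> (T \<inter> U)" by auto
  then have "inversions T V = inversions (T - U) V + inversions (T \<inter> U) V"
      "inversions U V = inversions (U - T) V + inversions (T \<inter> U) V"
    using assms by (metis inversions_Un_left Diff_disjoint Int_Diff_disjoint Int_commute finite_Diff finite_Int)+
  moreover have "inversions (symdiff T U) V = inversions (T - U) V + inversions (U - T) V"
    unfolding symdiff_def using assms by (auto intro: inversions_Un_left)
  ultimately show ?thesis by simp
qed

lemma inversions_symdiff_right:
  assumes "finite T" "finite U" "finite V"
  shows "inversions T (symdiff U V) + 2 * inversions T (U \<inter> V) = inversions T U + inversions T V"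
proof -
  have "U = (U - V) \<union> (U \<inter> V)" "V = (V - U) \<union> (U \<inter> V)" by auto
  then have "inversions T U = inversions T (U - V) + inversions T (U \<inter> V)"
      "inversions T V = inversions T (V - U) + inversions T (U \<inter> V)"
    using assms by (metis inversions_Un_right Diff_disjoint Int_Diff_disjoint Int_commute finite_Diff finite_Int)+
  moreover have "inversions T (symdiff U V) = inversions T (U - V) + inversions T (V - U)"
    unfolding symdiff_def using assms by (auto intro: inversions_Un_right)
  ultimately show ?thesis by simp
qed

lemma bsign_cocycle:
  assumes "finite T" "finite U" "finite V"
  shows "bsign p T U * bsign p (symdiff T U) V = bsign p U V * bsign p T (symdiff U V)"
proof -
  have "even (inversions T U + inversions (symdiff T U) V) \<longleftrightarrow>
      even (inversions U V + inversions T (symdiff U V))"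
    using inversions_symdiff_left[OF assms] inversions_symdiff_right[OF assms] by presburger
  then have signs: "(-1::real) ^ (inversions T U + inversions (symdiff T U) V) =
      (-1) ^ (inversions U V + inversions T (symdiff U V))"
    by (simp add: minus_one_power_iff)
  have "(\<Prod>i\<in>T \<inter> U. metric p i) * (\<Prod>i\<in>symdiff T U \<inter> V. metric p i)
      = (\<Prod>i\<in>(T \<inter> U) \<union> (symdiff T U \<inter> V). metric p i)"
    "(\<Prod>i\<in>U \<inter> V. metric p i) * (\<Prod>i\<in>T \<inter> symdiff U V. metric p i)
      = (\<Prod>i\<in>(U \<inter> V) \<union> (T \<inter> symdiff U V). metric p i)"
    by (rule prod.union_disjoint[symmetric]; use assms in \<open>auto simp: symdiff_def\<close>)+
  moreover have "(T \<inter> U) \<union> (symdiff T U \<inter> V) = (U \<inter> V) \<union> (T \<inter> symdiff U V)"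
    by (auto simp: symdiff_def)
  ultimately show ?thesis
    using signs by (simp add: bsign_eq power_add algebra_simps)
qed

lemma gp_lincomb_left:
  "gp p q (\<lambda>S. a * A S + b * A' S) B = (\<lambda>S. a * gp p q A B S + b * gp p q A' B S)"
  unfolding gp_def
  by (simp add: fun_eq_iff sum_distrib_left sum.distrib[symmetric] algebra_simps if_distrib cong: if_cong)

lemma gp_lincomb_right:
  "gp p q A (\<lambda>S. a * B S + b * B' S) = (\<lambda>S. a * gp p q A B S + b * gp p q A B' S)"
  unfolding gp_def
  by (simp add: fun_eq_iff sum_distrib_left sum.distrib[symmetric] algebra_simps if_distrib cong: if_cong)

lemma gp_smul_left: "gp p q (smul r A) B = smul r (gp p q A B)"
  using gp_lincomb_left[of p q r A 0 A B] by (simp add: smul_def)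

lemma gp_add_left: "gp p q (mv_add A A') B = mv_add (gp p q A B) (gp p q A' B)"
  using gp_lincomb_left[of p q 1 A 1 A' B] by (simp add: mv_add_def)

lemma gp_sub_left: "gp p q (mv_sub A A') B = mv_sub (gp p q A B) (gp p q A' B)"
  using gp_lincomb_left[of p q 1 A "-1" A' B] by (simp add: mv_sub_def)

lemma gp_smul_right: "gp p q A (smul r B) = smul r (gp p q A B)"
  using gp_lincomb_right[of p q A r B 0 B] by (simp add: smul_def)

lemma gp_add_right: "gp p q A (mv_add B B') = mv_add (gp p q A B) (gp p q A B')"
  using gp_lincomb_right[of p q A 1 B 1 B'] by (simp add: mv_add_def)

lemma gp_sub_right: "gp p q A (mv_sub B B') = mv_sub (gp p q A B) (gp p q A B')"
  using gp_lincomb_right[of p q A 1 B "-1" B'] by (simp add: mv_sub_def)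

lemma sum_collapse_image:
  fixes f :: "'a \<Rightarrow> 'a \<Rightarrow> 'b::comm_semiring_0"
  assumes "finite R" and "\<And>T U. T \<in> R \<Longrightarrow> U \<in> R \<Longrightarrow> h T U \<in> R"
  shows "(\<Sum>X\<in>R. g X * (\<Sum>T\<in>R. \<Sum>U\<in>R. if h T U = X then f T U else 0)) =
    (\<Sum>T\<in>R. \<Sum>U\<in>R. g (h T U) * f T U)"
proof -
  have "(\<Sum>X\<in>R. g X * (\<Sum>T\<in>R. \<Sum>U\<in>R. if h T U = X then f T U else 0)) =
      (\<Sum>X\<in>R. \<Sum>T\<in>R. \<Sum>U\<in>R. if h T U = X then g X * f T U else 0)"
    by (simp add: sum_distrib_left if_distrib cong: if_cong)
  also have "\<dots> = (\<Sum>T\<in>R. \<Sum>X\<in>R. \<Sum>U\<in>R. if h T U = X then g X * f T U else 0)"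
    by (rule sum.swap)
  also have "\<dots> = (\<Sum>T\<in>R. \<Sum>U\<in>R. \<Sum>X\<in>R. if h T U = X then g X * f T U else 0)"
    by (intro sum.cong refl sum.swap)
  also have "\<dots> = (\<Sum>T\<in>R. \<Sum>U\<in>R. g (h T U) * f T U)"
    using assms by (simp add: sum.delta)
  finally show ?thesis .
qed

lemma symdiff_subset: "T \<subseteq> R \<Longrightarrow> U \<subseteq> R \<Longrightarrow> symdiff T U \<subseteq> R"
  by (auto simp: symdiff_def)

lemma gp_gp_left_expand:
  "gp p q (gp p q A B) C S = (\<Sum>T\<in>Pow {..<p+q}. \<Sum>U\<in>Pow {..<p+q}. \<Sum>V\<in>Pow {..<p+q}.
     if symdiff (symdiff T U) V = S
     then bsign p T U * bsign p (symdiff T U) V * A T * B U * C V else 0)"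
  (is "_ = (\<Sum>T\<in>?R. \<Sum>U\<in>?R. \<Sum>V\<in>?R. ?F T U V)")
proof -
  define g where "g V X = (if symdiff X V = S then bsign p X V * C V else 0)" for V X
  have "gp p q (gp p q A B) C S = (\<Sum>X\<in>?R. \<Sum>V\<in>?R. g V X * gp p q A B X)"
    unfolding gp_def[of p q "gp p q A B"] g_def by (intro sum.cong refl) simp
  also have "\<dots> = (\<Sum>V\<in>?R. \<Sum>X\<in>?R. g V X * gp p q A B X)"
    by (rule sum.swap)
  also have "\<dots> = (\<Sum>V\<in>?R. \<Sum>T\<in>?R. \<Sum>U\<in>?R. g V (symdiff T U) * (bsign p T U * A T * B U))"
    unfolding gp_def by (intro sum.cong refl sum_collapse_image) (auto simp: symdiff_subset)
  also have "\<dots> = (\<Sum>T\<in>?R. \<Sum>V\<in>?R. \<Sum>U\<in>?R. g V (symdiff T U) * (bsign p T U * A T * B U))"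
    by (rule sum.swap)
  also have "\<dots> = (\<Sum>T\<in>?R. \<Sum>U\<in>?R. \<Sum>V\<in>?R. g V (symdiff T U) * (bsign p T U * A T * B U))"
    by (intro sum.cong refl sum.swap)
  also have "\<dots> = (\<Sum>T\<in>?R. \<Sum>U\<in>?R. \<Sum>V\<in>?R. ?F T U V)"
    unfolding g_def by (intro sum.cong refl) simp
  finally show ?thesis .
qed

lemma gp_gp_right_expand:
  "gp p q A (gp p q B C) S = (\<Sum>T\<in>Pow {..<p+q}. \<Sum>U\<in>Pow {..<p+q}. \<Sum>V\<in>Pow {..<p+q}.
     if symdiff T (symdiff U V) = S
     then bsign p U V * bsign p T (symdiff U V) * A T * B U * C V else 0)"
  (is "_ = (\<Sum>T\<in>?R. \<Sum>U\<in>?R. \<Sum>V\<in>?R. ?F T U V)")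
proof -
  define g where "g T Y = (if symdiff T Y = S then bsign p T Y * A T else 0)" for T Y
  have "gp p q A (gp p q B C) S = (\<Sum>T\<in>?R. \<Sum>Y\<in>?R. g T Y * gp p q B C Y)"
    unfolding gp_def[of p q A] g_def by (intro sum.cong refl) simp
  also have "\<dots> = (\<Sum>T\<in>?R. \<Sum>U\<in>?R. \<Sum>V\<in>?R. g T (symdiff U V) * (bsign p U V * B U * C V))"
    unfolding gp_def by (intro sum.cong refl sum_collapse_image) (auto simp: symdiff_subset)
  also have "\<dots> = (\<Sum>T\<in>?R. \<Sum>U\<in>?R. \<Sum>V\<in>?R. ?F T U V)"
    unfolding g_def by (intro sum.cong refl) simp
  finally show ?thesis .
qed

lemma gp_assoc: "gp p q (gp p q A B) C = gp p q A (gp p q B C)"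
proof
  fix S
  have "symdiff (symdiff T U) V = symdiff T (symdiff U V)" for T U V :: "nat set"
    by (auto simp: symdiff_def)
  moreover have "bsign p T U * bsign p (symdiff T U) V = bsign p U V * bsign p T (symdiff U V)"
    if "T \<in> Pow {..<p+q}" "U \<in> Pow {..<p+q}" "V \<in> Pow {..<p+q}" for T U V
    using that by (intro bsign_cocycle) (auto intro: finite_subset)
  ultimately show "gp p q (gp p q A B) C S = gp p q A (gp p q B C) S"
    unfolding gp_gp_left_expand gp_gp_right_expand by (intro sum.cong refl) auto
qed

lemma mv_op: "mv p q (op p q A B)"
  unfolding mv_def
proof (intro allI impI)
  fix S assume nonzero: "op p q A B S \<noteq> 0"
  show "S \<subseteq> {..<p+q}"
  proof (rule ccontr)
    assume "\<not> S \<subseteq> {..<p+q}"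
    then have "op p q A B S = 0"
      unfolding op_def by (intro sum.neutral ballI) auto
    with nonzero show False by simp
  qed
qed

lemma is_blade_mv: "is_blade p q B \<Longrightarrow> mv p q B"
  unfolding is_blade_def
proof (elim exE conjE)
  fix r vs assume "B = smul r (foldr (op p q) vs (scal 1))"
  moreover have "mv p q (foldr (op p q) vs (scal 1))"
    by (cases vs) (simp_all add: mv_op, simp add: mv_def scal_def)
  ultimately show "mv p q B" by (simp add: mv_def smul_def)
qed

lemma gp_scal_one_left:
  assumes "mv p q X" shows "gp p q (scal 1) X = X"
proof
  fix S
  have "(if symdiff T U = S then bsign p T U * scal 1 T * X U else 0) =
      (if T = {} then if U = S then X U else 0 else 0)" for T U
    by (simp add: scal_def symdiff_def bsign_def)
  then have "gp p q (scal 1) X S = (\<Sum>U\<in>Pow {..<p+q}. if U = S then X U else 0)"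
    unfolding gp_def by (subst sum.swap) (simp add: sum.delta)
  also have "\<dots> = X S"
    using assms by (auto simp: sum.delta mv_def)
  finally show "gp p q (scal 1) X S = X S" .
qed

lemma gp_scal_one_right:
  assumes "mv p q X" shows "gp p q X (scal 1) = X"
proof
  fix S
  have "(if symdiff T U = S then bsign p T U * X T * scal 1 U else 0) =
      (if U = {} then if T = S then X T else 0 else 0)" for T U
    by (simp add: scal_def symdiff_def bsign_def)
  then have "gp p q X (scal 1) S = (\<Sum>T\<in>Pow {..<p+q}. if T = S then X T else 0)"
    unfolding gp_def by (simp add: sum.delta)
  also have "\<dots> = X S"
    using assms by (auto simp: sum.delta mv_def)
  finally show "gp p q X (scal 1) S = X S" .
qed

lemma ga_inv_eq_smul:
  assumes "mv p q B" and "c \<noteq> 0" and "gp p q B B = scal c"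
  shows "ga_inv p q B = smul (1/c) B"
  unfolding ga_inv_def
proof (rule the_equality)
  have "smul (1/c) (scal c) = scal 1"
    using assms(2) by (simp add: smul_def scal_def fun_eq_iff)
  then have right_inv: "gp p q B (smul (1/c) B) = scal 1"
    and left_inv: "gp p q (smul (1/c) B) B = scal 1"
    by (simp_all add: gp_smul_left gp_smul_right assms(3))
  moreover have mv_inv: "mv p q (smul (1/c) B)"
    using assms(1) by (auto simp: mv_def smul_def)
  ultimately show "mv p q (smul (1/c) B) \<and> gp p q B (smul (1/c) B) = scal 1 \<and>
      gp p q (smul (1/c) B) B = scal 1"
    by simp
  fix C assume C: "mv p q C \<and> gp p q B C = scal 1 \<and> gp p q C B = scal 1"
  then have "C = gp p q C (gp p q B (smul (1/c) B))"
    by (simp add: right_inv gp_scal_one_right)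
  also have "\<dots> = smul (1/c) B"
    by (simp add: gp_assoc[symmetric] C gp_scal_one_left mv_inv)
  finally show "C = smul (1/c) B" .
qed

definition ga_conj :: "nat \<Rightarrow> nat \<Rightarrow> mvec \<Rightarrow> mvec \<Rightarrow> mvec" where
  "ga_conj p q B X = gp p q (gp p q (ga_inv p q B) X) B"

lemma cproj_eq_ga_conj:
  "cproj p q j B X = (if j = 0 then smul (1/2) (mv_add X (ga_conj p q B X))
     else smul (1/2) (mv_sub X (ga_conj p q B X)))"
  by (simp add: cproj_def ga_conj_def Let_def)

lemma ga_conj_add: "ga_conj p q B (mv_add X Y) = mv_add (ga_conj p q B X) (ga_conj p q B Y)"
  by (simp add: ga_conj_def gp_add_left gp_add_right)

lemma ga_conj_sub: "ga_conj p q B (mv_sub X Y) = mv_sub (ga_conj p q B X) (ga_conj p q B Y)"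
  by (simp add: ga_conj_def gp_sub_left gp_sub_right)

lemma ga_conj_smul: "ga_conj p q B (smul r X) = smul r (ga_conj p q B X)"
  by (simp add: ga_conj_def gp_smul_left gp_smul_right)

lemma cproj_commute_if_ga_conj_commute:
  assumes "\<And>X. ga_conj p q B1 (ga_conj p q B2 X) = ga_conj p q B2 (ga_conj p q B1 X)"
  shows "cproj p q j1 B1 (cproj p q j2 B2 Y) = cproj p q j2 B2 (cproj p q j1 B1 Y)"
  unfolding cproj_eq_ga_conj
  by (simp only: ga_conj_add ga_conj_sub ga_conj_smul split: if_split)
    (simp add: fun_eq_iff smul_def mv_add_def mv_sub_def assms algebra_simps)

lemma ga_conj_eq_smul:
  assumes "mv p q B" and "c \<noteq> 0" and "gp p q B B = scal c"
  shows "ga_conj p q B X = smul (1/c) (gp p q (gp p q B X) B)"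
  using ga_inv_eq_smul[OF assms] by (simp add: ga_conj_def gp_smul_left)

lemma ga_conj_commute:
  assumes "mv p q B1" "c1 \<noteq> 0" "gp p q B1 B1 = scal c1"
    and "mv p q B2" "c2 \<noteq> 0" "gp p q B2 B2 = scal c2"
    and "coorthogonal p q B1 B2"
  shows "ga_conj p q B1 (ga_conj p q B2 X) = ga_conj p q B2 (ga_conj p q B1 X)"
proof -
  have smul_smul: "smul a (smul b Y) = smul (a * b) Y" for a b Y
    by (simp add: smul_def fun_eq_iff)
  \<comment> \<open>The sign relating \<open>B1 B2\<close> and \<open>B2 B1\<close> occurs on both sides of \<open>X\<close> and cancels.\<close>
  have sandwich: "gp p q (gp p q (gp p q B1 B2) X) (gp p q B2 B1) =
      gp p q (gp p q (gp p q B2 B1) X) (gp p q B1 B2)"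
    using assms(7) unfolding coorthogonal_def
    by (elim disjE) (simp_all add: gp_smul_left gp_smul_right smul_smul)
  have "ga_conj p q B1 (ga_conj p q B2 X) =
      smul (1/c1 * (1/c2)) (gp p q (gp p q (gp p q B1 B2) X) (gp p q B2 B1))"
    by (simp add: ga_conj_eq_smul[OF assms(1-3)] ga_conj_eq_smul[OF assms(4-6)] gp_smul_left gp_smul_right smul_smul gp_assoc)
  also have "\<dots> = smul (1/c2 * (1/c1)) (gp p q (gp p q (gp p q B2 B1) X) (gp p q B1 B2))"
    by (simp add: sandwich mult.commute)
  also have "\<dots> = ga_conj p q B2 (ga_conj p q B1 X)"
    by (simp add: ga_conj_eq_smul[OF assms(1-3)] ga_conj_eq_smul[OF assms(4-6)] gp_smul_left gp_smul_right smul_smul gp_assoc)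
  finally show ?thesis .
qed

lemma cproj_commute:
  assumes "is_blade p q B1" "c1 \<noteq> 0" "gp p q B1 B1 = scal c1"
    and "is_blade p q B2" "c2 \<noteq> 0" "gp p q B2 B2 = scal c2"
    and "coorthogonal p q B1 B2"
  shows "cproj p q j1 B1 (cproj p q j2 B2 X) = cproj p q j2 B2 (cproj p q j1 B1 X)"
  using assms by (intro cproj_commute_if_ga_conj_commute ga_conj_commute) (auto intro: is_blade_mv)

lemma foldr_apply_commute:
  assumes "\<forall>g\<in>set fs. \<forall>X. f (g X) = g (f X)"
  shows "foldr (\<lambda>g X. g X) fs (f A) = f (foldr (\<lambda>g X. g X) fs A)"
  using assms by (induction fs) auto

lemma foldl_apply_eq_foldr_apply:
  assumes "\<forall>f\<in>set fs. \<forall>g\<in>set fs. \<forall>X. f (g X) = g (f X)"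
  shows "foldl (\<lambda>X f. f X) A fs = foldr (\<lambda>f X. f X) fs A"
  using assms
proof (induction fs arbitrary: A)
  case (Cons f fs)
  then have "foldl (\<lambda>X f. f X) A (f # fs) = foldr (\<lambda>f X. f X) fs (f A)"
    by simp
  also have "\<dots> = f (foldr (\<lambda>f X. f X) fs A)"
    using Cons.prems by (intro foldr_apply_commute) auto
  finally show ?case by simp
qed simp

theorem corollary3p5:
  fixes p q :: nat and A :: mvec and Bs :: "mvec list" and js :: "nat list"
  assumes "mv p q A"
    and "\<forall>k < length Bs. is_blade p q (Bs ! k)"
    and "\<forall>k < length Bs. \<forall>l < length Bs. k \<noteq> l \<longrightarrow> coorthogonal p q (Bs ! k) (Bs ! l)"
    and "\<forall>k < length Bs. \<exists>c::real. c \<noteq> 0 \<and> gp p q (Bs ! k) (Bs ! k) = scal c"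
    and "length js = length Bs"
    and "set js \<subseteq> {0, 1}"
  shows "cproj_fwd p q js Bs A = cproj_bwd p q js Bs A"
proof -
  \<comment> \<open>\<open>cproj\<close> treats every \<open>j \<noteq> 0\<close> as \<open>1\<close>.\<close>
  let ?fs = "map (\<lambda>(B, j). cproj p q j B) (zip Bs js)"
  have "\<forall>f\<in>set ?fs. \<forall>g\<in>set ?fs. \<forall>X. f (g X) = g (f X)"
  proof (intro ballI allI)
    fix f g X assume "f \<in> set ?fs" "g \<in> set ?fs"
    then obtain k l where k: "k < length Bs" "f = cproj p q (js ! k) (Bs ! k)"
      and l: "l < length Bs" "g = cproj p q (js ! l) (Bs ! l)"
      using assms(5) by (auto simp: set_zip)
    show "f (g X) = g (f X)"
    proof (cases "k = l")
      case False
      obtain ck cl where "ck \<noteq> 0" "gp p q (Bs ! k) (Bs ! k) = scal ck"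
        and "cl \<noteq> 0" "gp p q (Bs ! l) (Bs ! l) = scal cl"
        using assms(4) k l by blast
      with False k l assms(2,3) show ?thesis
        by (auto intro: cproj_commute)
    qed (use k l in simp)
  qed
  then have "foldl (\<lambda>X f. f X) A ?fs = foldr (\<lambda>f X. f X) ?fs A"
    by (rule foldl_apply_eq_foldr_apply)
  then show ?thesis
    by (simp add: cproj_fwd_def cproj_bwd_def foldl_map foldr_map split_def o_def)
qed

end
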